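(* Let $X\sim p(\bm x,\bm\theta)$ on $\mathbb R^d$ and let $\hat{\bm\theta}=(\hat\theta_1,\dots,\hat\theta_m):\mathbb R^d\to\mathbb R^m$ be an estimator whose components are three times continuously differentiable with bounded third derivatives and such that $\hat\theta_a$, their first and second derivatives have finite second moments under $p(\cdot,\bm\theta)$. Let $Z=\sigma W$ where $W$ is independent of $X$, $\mathrm E[W]=0$, $\mathrm{Var}[W]=I$, and $W$ has finite moments of all orders. Then for all $a,b$, $$\mathrm{Var}^W_{\theta}[\hat{\bm\theta}]_{ab}=\lim_{\sigma^2\to0}\frac{\mathrm{Var}_\theta[\hat{\bm\theta}(X+Z)]_{ab}-\mathrm{Var}_\theta[\hat{\bm\theta}(X)]_{ab}}{\sigma^2}-\frac12\Big(\mathrm{Cov}_\theta[\hat\theta_a(X),\Delta\hat\theta_b(X)]+\mathrm{Cov}_\theta[\hat\theta_b(X),\Delta\hat\theta_a(X)]\Big),$$ where $\Delta$ is the Laplacian. In particular, if $\Delta\hat\theta_a$ is constant for every $a$ (e.g. each $\hat\theta_a$ is a quadratic polynomial in $\bm x$), then $\mathrm{Var}^W_\theta[\hat{\bm\theta}]=\lim_{\sigma^2\to0}\big(\mathrm{Var}_\theta[\hat{\bm\theta}(X+Z)]-\mathrm{Var}_\theta[\hat{\bm\theta}(X)]\big)/\sigma^2$.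
   Context: The Wasserstein covariance matrix of an estimator $\hat{\bm\theta}$ (with $\nabla_{\bm x}\hat\theta_a$ square integrable) is the $m\times m$ matrix $\mathrm{Var}^W_\theta[\hat{\bm\theta}]_{ab}=\mathrm E_\theta[(\nabla_{\bm x}\hat\theta_a)^\top(\nabla_{\bm x}\hat\theta_b)]$. $\mathrm{Var}_\theta[\cdot]$ denotes the ordinary covariance matrix. *)

theory Defs
  imports "HOL-Analysis.Analysis" "HOL-Probability.Probability"
begin

definition partial_deriv :: "'n::finite \<Rightarrow> (real^'n \<Rightarrow> real) \<Rightarrow> real^'n \<Rightarrow> real" where
  "partial_deriv i g x = deriv (\<lambda>t. g (x + t *\<^sub>R axis i 1)) 0"

definition has_partials :: "(real^'n::finite \<Rightarrow> real) \<Rightarrow> bool" where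
  "has_partials g \<longleftrightarrow> (\<forall>i x. (\<lambda>t. g (x + t *\<^sub>R axis i 1)) differentiable (at 0))"

definition C3_bounded_third :: "(real^'n::finite \<Rightarrow> real) \<Rightarrow> bool" where
  "C3_bounded_third g \<longleftrightarrow>
     continuous_on UNIV g \<and> has_partials g \<and>
     (\<forall>i. continuous_on UNIV (partial_deriv i g) \<and> has_partials (partial_deriv i g)) \<and>
     (\<forall>i j. continuous_on UNIV (partial_deriv j (partial_deriv i g)) \<and>
            has_partials (partial_deriv j (partial_deriv i g))) \<and>
     (\<forall>i j k. continuous_on UNIV (partial_deriv k (partial_deriv j (partial_deriv i g))) \<and>
              bounded (range (partial_deriv k (partial_deriv j (partial_deriv i g)))))"

definition laplacian :: "(real^'n::finite \<Rightarrow> real) \<Rightarrow> real^'n \<Rightarrow> real" where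
  "laplacian g x = (\<Sum>i\<in>UNIV. partial_deriv i (partial_deriv i g) x)"

definition covar :: "'a measure \<Rightarrow> ('a \<Rightarrow> real) \<Rightarrow> ('a \<Rightarrow> real) \<Rightarrow> real" where
  "covar M f g = (\<integral>\<omega>. (f \<omega> - (\<integral>\<omega>'. f \<omega>' \<partial>M)) * (g \<omega> - (\<integral>\<omega>'. g \<omega>' \<partial>M)) \<partial>M)"

definition wasserstein_cov ::
  "'a measure \<Rightarrow> ('a \<Rightarrow> real^'n::finite) \<Rightarrow> ('m \<Rightarrow> real^'n \<Rightarrow> real) \<Rightarrow> 'm \<Rightarrow> 'm \<Rightarrow> real" where
  "wasserstein_cov M X f a b =
     (\<integral>\<omega>. (\<Sum>i\<in>UNIV. partial_deriv i (f a) (X \<omega>) * partial_deriv i (f b) (X \<omega>)) \<partial>M)"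

end

theory Submission
  imports Defs
begin

text \<open>Write \<open>\<sigma> = sqrt s\<close>. Taylor's theorem with bounded third derivatives gives
  \<open>g (x + \<sigma> w) h (x + \<sigma> w) = g x h x + \<sigma> c\<^sub>1 x w + \<sigma>\<^sup>2 c\<^sub>2 x w + O(\<sigma>\<^sup>3)\<close>, where \<open>c\<^sub>1\<close> is linear
  and \<open>c\<^sub>2\<close> quadratic in \<open>w\<close>, and the \<open>O\<close>-constant is a polynomial in \<open>norm w\<close> times a function of \<open>x\<close>
  which is integrable by the moment hypotheses. Since \<open>W\<close> is independent of \<open>X\<close> with mean \<open>0\<close> and
  identity covariance, \<open>E c\<^sub>1(X, W) = 0\<close> and \<open>E c\<^sub>2(X, W) = E (\<nabla>g \<cdot> \<nabla>h) + (E (g \<Delta>h) + E (\<Delta>g h)) / 2\<close>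
  at \<open>X\<close>; so the second moment changes by \<open>s\<close> times this plus \<open>O(s\<^sup>3\<^sup>/\<^sup>2)\<close>. Taking \<open>h = 1\<close> gives the
  change of the means, \<open>s E \<Delta>g / 2 + O(s\<^sup>3\<^sup>/\<^sup>2)\<close>, and subtracting products of means turns the
  second moments into covariances.\<close>

definition dir_deriv :: "(real^'n::finite \<Rightarrow> real) \<Rightarrow> real^'n \<Rightarrow> real^'n \<Rightarrow> real" where
  "dir_deriv g x h = (\<Sum>i\<in>UNIV. h$i * partial_deriv i g x)"

definition hess_form :: "(real^'n::finite \<Rightarrow> real) \<Rightarrow> real^'n \<Rightarrow> real^'n \<Rightarrow> real" where
  "hess_form g x h = (\<Sum>i\<in>UNIV. h$i * dir_deriv (partial_deriv i g) x h)"

lemma dir_deriv_scaleR: "dir_deriv g x (c *\<^sub>R h) = c * dir_deriv g x h"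
  by (simp add: dir_deriv_def sum_distrib_left mult.assoc)

lemma hess_form_scaleR: "hess_form g x (c *\<^sub>R h) = c\<^sup>2 * hess_form g x h"
  by (simp add: hess_form_def dir_deriv_scaleR sum_distrib_left power2_eq_square algebra_simps)

lemma abs_sum_component_mult_le:
  fixes h :: "real^'n::finite"
  assumes "\<And>i. \<bar>A i\<bar> \<le> B"
  shows "\<bar>\<Sum>i\<in>UNIV. h$i * A i\<bar> \<le> real CARD('n) * norm h * B"
proof -
  have "\<bar>\<Sum>i\<in>UNIV. h$i * A i\<bar> \<le> (\<Sum>i\<in>UNIV. \<bar>h$i\<bar> * \<bar>A i\<bar>)"
    using sum_abs[of "\<lambda>i. h$i * A i" UNIV] by (simp add: abs_mult)
  also have "\<dots> \<le> (\<Sum>i\<in>(UNIV::'n set). norm h * B)"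
    using assms by (intro sum_mono mult_mono)
      (auto intro: component_le_norm_cart[of h, unfolded real_norm_def] order_trans[OF abs_ge_zero])
  finally show ?thesis by simp
qed

lemma has_real_derivative_partial_deriv:
  assumes "has_partials g"
  shows "((\<lambda>t. g (x + t *\<^sub>R axis i 1)) has_real_derivative partial_deriv i g (x + t *\<^sub>R axis i 1)) (at t)"
proof -
  have "(\<lambda>s. g ((x + t *\<^sub>R axis i 1) + s *\<^sub>R axis i 1)) differentiable (at 0)"
    using assms unfolding has_partials_def by blast
  then have "((\<lambda>s. g ((x + t *\<^sub>R axis i 1) + s *\<^sub>R axis i 1))
      has_real_derivative partial_deriv i g (x + t *\<^sub>R axis i 1)) (at 0)"
    unfolding partial_deriv_def using DERIV_deriv_iff_real_differentiable by blast
  then have "((\<lambda>s. g (x + (s + t) *\<^sub>R axis i 1)) has_real_derivative partial_deriv i g (x + t *\<^sub>R axis i 1)) (at 0)"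
    by (simp add: scaleR_add_left algebra_simps)
  then show ?thesis using DERIV_shift[of "\<lambda>t. g (x + t *\<^sub>R axis i 1)" _ 0 t] by simp
qed

lemma mean_value_between_zero:
  fixes \<phi> \<phi>' :: "real \<Rightarrow> real"
  assumes "\<And>t. (\<phi> has_real_derivative \<phi>' t) (at t)"
  shows "\<exists>t. \<bar>t\<bar> \<le> \<bar>b\<bar> \<and> \<phi> b - \<phi> 0 = b * \<phi>' t"
proof (cases b "0::real" rule: linorder_cases)
  case less
  from MVT2[OF less assms] obtain z where "b < z" "z < 0" "\<phi> 0 - \<phi> b = (0 - b) * \<phi>' z" by blast
  then show ?thesis by (intro exI[of _ z]) (auto simp: algebra_simps)
next
  case greater
  from MVT2[OF greater assms] obtain z where "0 < z" "z < b" "\<phi> b - \<phi> 0 = (b - 0) * \<phi>' z" by blast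
  then show ?thesis by (intro exI[of _ z]) auto
qed auto

definition restrict_coords :: "'n::finite set \<Rightarrow> real^'n \<Rightarrow> real^'n" where
  "restrict_coords S h = (\<chi> i. if i \<in> S then h$i else 0)"

lemma restrict_coords_UNIV [simp]: "restrict_coords UNIV h = h"
  and restrict_coords_empty [simp]: "restrict_coords {} h = 0"
  by (simp_all add: restrict_coords_def vec_eq_iff)

lemma restrict_coords_insert:
  "k \<notin> S \<Longrightarrow> restrict_coords (insert k S) h = restrict_coords S h + h$k *\<^sub>R axis k 1"
  by (auto simp: restrict_coords_def vec_eq_iff axis_def)

lemma norm_restrict_coords_plus_axis_le:
  assumes "k \<notin> S" "\<bar>t\<bar> \<le> \<bar>h$k\<bar>"
  shows "norm (restrict_coords S h + t *\<^sub>R axis k 1) \<le> norm h"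
  by (rule norm_le_componentwise_cart) (use assms in \<open>auto simp: restrict_coords_def axis_def\<close>)

text \<open>Change one coordinate at a time and apply the mean value theorem to each step.\<close>
lemma abs_increment_minus_dir_deriv_le:
  fixes g :: "real^'n::finite \<Rightarrow> real"
  assumes hp: "has_partials g"
    and close: "\<And>y i. dist y x < d \<Longrightarrow> \<bar>partial_deriv i g y - partial_deriv i g x\<bar> \<le> \<epsilon>"
    and h: "norm h < d"
  shows "\<bar>g (x + h) - g x - dir_deriv g x h\<bar> \<le> \<epsilon> * (\<Sum>i\<in>UNIV. \<bar>h$i\<bar>)"
proof -
  have "\<bar>g (x + restrict_coords S h) - g x - (\<Sum>i\<in>S. h$i * partial_deriv i g x)\<bar> \<le> \<epsilon> * (\<Sum>i\<in>S. \<bar>h$i\<bar>)"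
    if "finite S" for S
    using that
  proof (induction S rule: finite_induct)
    case (insert k S)
    define y where "y = x + restrict_coords S h"
    obtain t where t: "\<bar>t\<bar> \<le> \<bar>h$k\<bar>"
      and mv: "g (y + h$k *\<^sub>R axis k 1) - g (y + 0 *\<^sub>R axis k 1) = h$k * partial_deriv k g (y + t *\<^sub>R axis k 1)"
      using mean_value_between_zero[OF has_real_derivative_partial_deriv[OF hp]] by blast
    have "dist (y + t *\<^sub>R axis k 1) x \<le> norm h"
      using norm_restrict_coords_plus_axis_le[OF insert(2) t] by (simp add: y_def dist_norm)
    then have "\<bar>partial_deriv k g (y + t *\<^sub>R axis k 1) - partial_deriv k g x\<bar> \<le> \<epsilon>"
      using close h by simp
    then have "\<bar>h$k\<bar> * \<bar>partial_deriv k g (y + t *\<^sub>R axis k 1) - partial_deriv k g x\<bar> \<le> \<bar>h$k\<bar> * \<epsilon>"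
      by (rule mult_left_mono) simp
    moreover have "g (y + h$k *\<^sub>R axis k 1) - g y - h$k * partial_deriv k g x
        = h$k * (partial_deriv k g (y + t *\<^sub>R axis k 1) - partial_deriv k g x)"
      using mv by (simp add: algebra_simps)
    ultimately have step: "\<bar>g (y + h$k *\<^sub>R axis k 1) - g y - h$k * partial_deriv k g x\<bar> \<le> \<epsilon> * \<bar>h$k\<bar>"
      by (simp add: abs_mult mult.commute)
    have "x + restrict_coords (insert k S) h = y + h$k *\<^sub>R axis k 1"
      by (simp add: restrict_coords_insert[OF insert(2)] y_def algebra_simps)
    then show ?case
      using step insert.IH insert(1,2) unfolding y_def by (simp add: algebra_simps)
  qed simp
  from this[of UNIV] show ?thesis by (simp add: dir_deriv_def)
qed

lemma has_derivative_dir_deriv: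
  fixes g :: "real^'n::finite \<Rightarrow> real"
  assumes hp: "has_partials g" and cont: "\<And>i. continuous_on UNIV (partial_deriv i g)"
  shows "(g has_derivative dir_deriv g x) (at x)"
  unfolding has_derivative_at_alt
proof (intro conjI allI impI)
  show "bounded_linear (dir_deriv g x)"
    unfolding dir_deriv_def
    by (intro bounded_linear_sum bounded_linear_compose[OF bounded_linear_mult_left bounded_linear_vec_nth])
  fix e :: real assume "e > 0"
  define \<epsilon> where "\<epsilon> = e / real CARD('n)"
  have "\<epsilon> > 0" using \<open>e > 0\<close> by (simp add: \<epsilon>_def)
  have "\<forall>\<^sub>F y in nhds x. dist (partial_deriv i g y) (partial_deriv i g x) < \<epsilon>" for i
    using cont[of i] \<open>\<epsilon> > 0\<close>
    by (intro tendstoD) (simp add: continuous_on_eq_continuous_at isCont_def tendsto_at_iff_tendsto_nhds[symmetric])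
  then have "\<forall>\<^sub>F y in nhds x. \<forall>i. dist (partial_deriv i g y) (partial_deriv i g x) < \<epsilon>"
    by (simp add: eventually_all_finite)
  then obtain d where "d > 0" and close: "\<And>y i. dist y x < d \<Longrightarrow> \<bar>partial_deriv i g y - partial_deriv i g x\<bar> \<le> \<epsilon>"
    unfolding eventually_nhds_metric dist_real_def by (meson less_imp_le)
  show "\<exists>d>0. \<forall>y. norm (y - x) < d \<longrightarrow> norm (g y - g x - dir_deriv g x (y - x)) \<le> e * norm (y - x)"
  proof (intro exI[of _ d] conjI allI impI \<open>d > 0\<close>)
    fix y assume "norm (y - x) < d"
    then have "\<bar>g y - g x - dir_deriv g x (y - x)\<bar> \<le> \<epsilon> * (\<Sum>i\<in>UNIV. \<bar>(y - x)$i\<bar>)"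
      using abs_increment_minus_dir_deriv_le[OF hp close, where h = "y - x"] by simp
    also have "\<dots> \<le> \<epsilon> * (\<Sum>i\<in>(UNIV::'n set). norm (y - x))"
      using \<open>\<epsilon> > 0\<close> component_le_norm_cart[of "y - x"] by (intro mult_left_mono sum_mono) auto
    also have "\<dots> = e * norm (y - x)" by (simp add: \<epsilon>_def)
    finally show "norm (g y - g x - dir_deriv g x (y - x)) \<le> e * norm (y - x)" by simp
  qed
qed

lemma has_real_derivative_along_line:
  fixes g :: "real^'n::finite \<Rightarrow> real"
  assumes "has_partials g" "\<And>i. continuous_on UNIV (partial_deriv i g)"
  shows "((\<lambda>t. g (x + t *\<^sub>R h)) has_real_derivative dir_deriv g (x + t *\<^sub>R h) h) (at t)"
proof -
  have "((\<lambda>t. x + t *\<^sub>R h) has_derivative (\<lambda>s. s *\<^sub>R h)) (at t)"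
    by (auto intro!: derivative_eq_intros)
  from has_derivative_compose[OF this has_derivative_dir_deriv[OF assms]]
  show ?thesis by (simp add: has_field_derivative_def dir_deriv_scaleR mult_commute_abs)
qed

text \<open>The uniform bound on the third partials makes the remainder constant independent of the
  base point.\<close>
lemma C3_bounded_third_taylor2:
  fixes g :: "real^'n::finite \<Rightarrow> real"
  assumes "C3_bounded_third g"
  shows "\<exists>K\<ge>0. \<forall>x h. \<bar>g (x + h) - g x - dir_deriv g x h - hess_form g x h / 2\<bar> \<le> K * norm h ^ 3"
proof -
  note g = assms[unfolded C3_bounded_third_def]
  have "bounded (\<Union>(i,j,k)\<in>UNIV. range (partial_deriv k (partial_deriv j (partial_deriv i g))))"
    using g by (intro bounded_UN) auto
  then obtain B where B: "\<And>i j k y. \<bar>partial_deriv k (partial_deriv j (partial_deriv i g)) y\<bar> \<le> B"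
    unfolding bounded_iff by fastforce
  define n where "n = real CARD('n)"
  have "B \<ge> 0" using B[of undefined undefined undefined undefined] by linarith
  show ?thesis
  proof (intro exI allI conjI)
    fix x h :: "real^'n"
    define D :: "nat \<Rightarrow> real \<Rightarrow> real" where "D = (\<lambda>m t. if m = 0 then g (x + t *\<^sub>R h)
      else if m = 1 then dir_deriv g (x + t *\<^sub>R h) h
      else if m = 2 then hess_form g (x + t *\<^sub>R h) h
      else (\<Sum>i\<in>UNIV. h$i * (\<Sum>j\<in>UNIV. h$j *
              dir_deriv (partial_deriv j (partial_deriv i g)) (x + t *\<^sub>R h) h)))"
    have derivs: "(D m has_real_derivative D (Suc m) t) (at t)" if "m < 3" for m t
    proof -
      consider "m = 0" | "m = 1" | "m = 2" using \<open>m < 3\<close> by linarith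
      then show ?thesis
        by cases (use g in \<open>auto simp: D_def hess_form_def dir_deriv_def[of "\<lambda>y. _ y"]
          intro!: DERIV_sum DERIV_cmult has_real_derivative_along_line[unfolded dir_deriv_def]\<close>)
    qed
    from Taylor[of 3 D "\<lambda>t. g (x + t *\<^sub>R h)" 0 1 0 1] derivs
    obtain t where "g (x + 1 *\<^sub>R h) = (\<Sum>m<3. D m 0 / fact m * (1 - 0) ^ m) + D 3 t / fact 3 * (1 - 0) ^ 3"
      by (auto simp: D_def)
    then have remainder: "g (x + h) - g x - dir_deriv g x h - hess_form g x h / 2 = D 3 t / 6"
      by (simp add: D_def eval_nat_numeral fact_numeral)
    have "\<bar>D 3 t\<bar> \<le> n * norm h * (n * norm h * (n * norm h * B))"
      unfolding D_def n_def dir_deriv_def using B by (auto intro!: abs_sum_component_mult_le)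
    then show "\<bar>g (x + h) - g x - dir_deriv g x h - hess_form g x h / 2\<bar> \<le> n^3 * B / 6 * norm h ^ 3"
      unfolding remainder by (simp add: power3_eq_cube algebra_simps)
  qed (simp add: n_def \<open>B \<ge> 0\<close>)
qed

definition jet_norm :: "(real^'n::finite \<Rightarrow> real) \<Rightarrow> real^'n \<Rightarrow> real" where
  "jet_norm g x = sqrt (1 + (g x)\<^sup>2 + (\<Sum>i\<in>UNIV. (partial_deriv i g x)\<^sup>2)
     + (\<Sum>i\<in>UNIV. \<Sum>j\<in>UNIV. (partial_deriv j (partial_deriv i g) x)\<^sup>2))"

lemma jet_norm_squared:
  "(jet_norm g x)\<^sup>2 = 1 + (g x)\<^sup>2 + (\<Sum>i\<in>UNIV. (partial_deriv i g x)\<^sup>2)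
     + (\<Sum>i\<in>UNIV. \<Sum>j\<in>UNIV. (partial_deriv j (partial_deriv i g) x)\<^sup>2)"
  unfolding jet_norm_def by (simp add: add_nonneg_nonneg sum_nonneg)

lemma one_le_jet_norm: "1 \<le> jet_norm g x"
  unfolding jet_norm_def by (simp add: add_nonneg_nonneg sum_nonneg)

lemma abs_le_jet_norm:
  "\<bar>g x\<bar> \<le> jet_norm g x"
  "\<bar>partial_deriv i g x\<bar> \<le> jet_norm g x"
  "\<bar>partial_deriv j (partial_deriv i g) x\<bar> \<le> jet_norm g x"
proof -
  let ?s1 = "\<Sum>i\<in>UNIV. (partial_deriv i g x)\<^sup>2"
  let ?s2 = "\<Sum>i\<in>UNIV. \<Sum>j\<in>UNIV. (partial_deriv j (partial_deriv i g) x)\<^sup>2"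
  have "(partial_deriv i g x)\<^sup>2 \<le> ?s1"
    by (rule member_le_sum) auto
  moreover have "(partial_deriv j (partial_deriv i g) x)\<^sup>2 \<le> ?s2"
    using member_le_sum[of j UNIV "\<lambda>j. (partial_deriv j (partial_deriv i g) x)\<^sup>2"]
      member_le_sum[of i UNIV "\<lambda>i. \<Sum>j\<in>UNIV. (partial_deriv j (partial_deriv i g) x)\<^sup>2"]
    by (simp add: sum_nonneg)
  moreover have "0 \<le> ?s1" "0 \<le> ?s2" "0 \<le> (g x)\<^sup>2" by (simp_all add: sum_nonneg)
  ultimately have "(g x)\<^sup>2 \<le> (jet_norm g x)\<^sup>2" "(partial_deriv i g x)\<^sup>2 \<le> (jet_norm g x)\<^sup>2"
    "(partial_deriv j (partial_deriv i g) x)\<^sup>2 \<le> (jet_norm g x)\<^sup>2"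
    by (unfold jet_norm_squared; linarith)+
  then show "\<bar>g x\<bar> \<le> jet_norm g x" "\<bar>partial_deriv i g x\<bar> \<le> jet_norm g x"
    "\<bar>partial_deriv j (partial_deriv i g) x\<bar> \<le> jet_norm g x"
    using power2_le_iff_abs_le[of "jet_norm g x"] one_le_jet_norm[of g x] by simp_all
qed

lemma abs_dir_deriv_le_jet_norm: "\<bar>dir_deriv g x h\<bar> \<le> real CARD('n) * norm h * jet_norm g x"
  for g :: "real^'n::finite \<Rightarrow> real"
  unfolding dir_deriv_def by (intro abs_sum_component_mult_le abs_le_jet_norm)

lemma abs_hess_form_le_jet_norm:
  "\<bar>hess_form g x h\<bar> \<le> real CARD('n) * norm h * (real CARD('n) * norm h * jet_norm g x)"
  for g :: "real^'n::finite \<Rightarrow> real"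
  unfolding hess_form_def dir_deriv_def by (intro abs_sum_component_mult_le abs_le_jet_norm)

definition lin_coeff :: "(real^'n::finite \<Rightarrow> real) \<Rightarrow> (real^'n \<Rightarrow> real) \<Rightarrow> real^'n \<Rightarrow> real^'n \<Rightarrow> real" where
  "lin_coeff g h x w = g x * dir_deriv h x w + dir_deriv g x w * h x"

definition quad_coeff :: "(real^'n::finite \<Rightarrow> real) \<Rightarrow> (real^'n \<Rightarrow> real) \<Rightarrow> real^'n \<Rightarrow> real^'n \<Rightarrow> real" where
  "quad_coeff g h x w = dir_deriv g x w * dir_deriv h x w + (g x * hess_form h x w + hess_form g x w * h x) / 2"

lemma abs_product_remainder_le:
  fixes \<sigma> A B Eg Eh G L Q H L' Q' U V :: real
  assumes \<sigma>: "0 < \<sigma>" "\<sigma> \<le> 1"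
    and A: "\<bar>G\<bar> \<le> A" "\<bar>L\<bar> \<le> A" "\<bar>Q\<bar> \<le> A"
    and B: "\<bar>H\<bar> \<le> B" "\<bar>L'\<bar> \<le> B" "\<bar>Q'\<bar> \<le> B"
    and U: "\<bar>U - (G + \<sigma>*L + \<sigma>\<^sup>2*Q)\<bar> \<le> Eg"
    and V: "\<bar>V - (H + \<sigma>*L' + \<sigma>\<^sup>2*Q')\<bar> \<le> Eh"
  shows "\<bar>U * V - G*H - \<sigma>*(G*L' + L*H) - \<sigma>\<^sup>2*(L*L' + G*Q' + Q*H)\<bar>
           \<le> \<sigma>^3*(3*A*B) + Eg*(3*B + Eh) + 3*A*Eh"
proof -
  let ?TG = "G + \<sigma>*L + \<sigma>\<^sup>2*Q" and ?TH = "H + \<sigma>*L' + \<sigma>\<^sup>2*Q'"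
  define R R' where "R = U - ?TG" and "R' = V - ?TH"
  have R: "\<bar>R\<bar> \<le> Eg" "\<bar>R'\<bar> \<le> Eh" using U V by (simp_all add: R_def R'_def)
  have "A \<ge> 0" "B \<ge> 0" using A(1) B(1) by linarith+
  have \<sigma>2: "0 \<le> \<sigma>\<^sup>2" "\<sigma>\<^sup>2 \<le> 1" "\<sigma>^4 \<le> \<sigma>^3" using \<sigma> by (auto simp: power_le_one power_decreasing)
  have scaled: "\<bar>c * y\<bar> \<le> C" if "0 \<le> c" "c \<le> 1" "\<bar>y\<bar> \<le> C" for c y C :: real
    using that by (simp add: abs_mult) (metis abs_ge_zero mult_left_le_one_le order_trans)
  have sum3: "\<bar>a + b + c\<bar> \<le> 3*C" if "\<bar>a\<bar> \<le> C" "\<bar>b\<bar> \<le> C" "\<bar>c\<bar> \<le> C" for a b c C :: real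
    using that by (simp add: abs_le_iff)
  have TG: "\<bar>?TG\<bar> \<le> 3*A" and TH: "\<bar>?TH\<bar> \<le> 3*B"
    using \<sigma> \<sigma>2 A B by (auto intro!: sum3 scaled)
  have p: "\<bar>L*Q'\<bar> \<le> A*B" "\<bar>Q*L'\<bar> \<le> A*B" "\<bar>Q*Q'\<bar> \<le> A*B"
    unfolding abs_mult using A B \<open>A \<ge> 0\<close> by (auto intro!: mult_mono)
  have t1: "\<bar>\<sigma>^3*(L*Q' + Q*L')\<bar> \<le> \<sigma>^3*(2*(A*B))"
    using p abs_triangle_ineq[of "L*Q'" "Q*L'"] \<sigma> by (simp add: abs_mult mult_left_mono)
  have t2: "\<bar>\<sigma>^4*(Q*Q')\<bar> \<le> \<sigma>^3*(A*B)"
    using mult_mono[OF \<sigma>2(3) p(3)] \<sigma> by (simp add: abs_mult)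
  have "\<bar>?TH + R'\<bar> \<le> 3*B + Eh"
    using abs_triangle_ineq[of ?TH R'] TH R(2) by linarith
  then have t3: "\<bar>R * (?TH + R')\<bar> \<le> Eg * (3*B + Eh)"
    unfolding abs_mult using R(1) by (intro mult_mono) auto
  have t4: "\<bar>?TG * R'\<bar> \<le> 3*A*Eh"
    unfolding abs_mult using TG R(2) \<open>A \<ge> 0\<close> by (intro mult_mono) auto
  have "U * V - G*H - \<sigma>*(G*L' + L*H) - \<sigma>\<^sup>2*(L*L' + G*Q' + Q*H)
      = \<sigma>^3*(L*Q' + Q*L') + \<sigma>^4*(Q*Q') + R * (?TH + R') + ?TG * R'"
    by (simp add: R_def R'_def power2_eq_square power3_eq_cube power4_eq_xxxx algebra_simps)
  also have "\<bar>\<dots>\<bar> \<le> \<sigma>^3*(2*(A*B)) + \<sigma>^3*(A*B) + Eg * (3*B + Eh) + 3*A*Eh"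
    using t1 t2 t3 t4 by (intro abs_triangle_ineq[THEN order_trans] add_mono) auto
  finally show ?thesis by (simp add: algebra_simps)
qed

lemma polynomial_scale_bounds:
  fixes n N :: real
  assumes "1 \<le> n" "0 \<le> N"
  shows "1 \<le> n\<^sup>2 * (1 + N)^3" "n * N \<le> n\<^sup>2 * (1 + N)^3" "(n * N)\<^sup>2 / 2 \<le> n\<^sup>2 * (1 + N)^3"
    "N^3 \<le> (1 + N)^3"
proof -
  have n: "1 \<le> n\<^sup>2" "n \<le> n\<^sup>2" using assms one_le_power[of n 2] self_le_power[of n 2] by simp_all
  have "N\<^sup>2 \<le> (1 + N)^3"
    by (rule order_trans[OF power_mono power_increasing]) (use assms in auto)
  then have N: "1 \<le> (1 + N)^3" "N \<le> (1 + N)^3" "N\<^sup>2 \<le> (1 + N)^3"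
    using assms self_le_power[of "1 + N" 3] by (auto simp: one_le_power)
  show one: "1 \<le> n\<^sup>2 * (1 + N)^3" using mult_mono[OF n(1) N(1)] by simp
  show "n * N \<le> n\<^sup>2 * (1 + N)^3" using assms by (intro mult_mono n N) auto
  have "(n * N)\<^sup>2 \<le> n\<^sup>2 * (1 + N)^3" unfolding power_mult_distrib using assms by (intro mult_left_mono N) auto
  then show "(n * N)\<^sup>2 / 2 \<le> n\<^sup>2 * (1 + N)^3" using one by simp
  show "N^3 \<le> (1 + N)^3" using assms by (intro power_mono) auto
qed

lemma abs_taylor_terms_le_jet_norm:
  fixes f :: "real^'n::finite \<Rightarrow> real" and x w :: "real^'n"
  defines "Y \<equiv> (1 + norm w)^3 * jet_norm f x"
  shows "\<bar>f x\<bar> \<le> (real CARD('n))\<^sup>2 * Y" "\<bar>dir_deriv f x w\<bar> \<le> (real CARD('n))\<^sup>2 * Y"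
    "\<bar>hess_form f x w / 2\<bar> \<le> (real CARD('n))\<^sup>2 * Y" "norm w ^ 3 \<le> Y"
proof -
  have "1 \<le> real CARD('n)" by simp
  note scale = polynomial_scale_bounds[OF this norm_ge_zero[of w]]
  have j: "1 \<le> jet_norm f x" by (rule one_le_jet_norm)
  then have j0: "0 \<le> jet_norm f x" by linarith
  show "\<bar>f x\<bar> \<le> (real CARD('n))\<^sup>2 * Y"
    using abs_le_jet_norm(1)[of f x] mult_right_mono[OF scale(1) j0] unfolding Y_def by (simp add: mult.assoc)
  show "\<bar>dir_deriv f x w\<bar> \<le> (real CARD('n))\<^sup>2 * Y"
    using abs_dir_deriv_le_jet_norm[of f x w] mult_right_mono[OF scale(2) j0] unfolding Y_def by (simp add: mult.assoc)
  have "\<bar>hess_form f x w\<bar> \<le> (real CARD('n) * norm w)\<^sup>2 * jet_norm f x"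
    using abs_hess_form_le_jet_norm[of f x w] by (simp add: power2_eq_square algebra_simps)
  then show "\<bar>hess_form f x w / 2\<bar> \<le> (real CARD('n))\<^sup>2 * Y"
    using mult_right_mono[OF scale(3) j0] unfolding Y_def by (simp add: mult.assoc)
  show "norm w ^ 3 \<le> Y"
    unfolding Y_def by (rule order_trans[OF scale(4)]) (use mult_left_mono[OF j, of "(1 + norm w)^3"] in simp)
qed

text \<open>Both factors are replaced by their second-order Taylor polynomials.\<close>
lemma C3_bounded_third_product_taylor2:
  fixes g h :: "real^'n::finite \<Rightarrow> real"
  assumes "C3_bounded_third g" "C3_bounded_third h"
  shows "\<exists>C\<ge>0. \<forall>\<sigma> x w. 0 < \<sigma> \<longrightarrow> \<sigma> \<le> 1 \<longrightarrow>
    \<bar>g (x + \<sigma> *\<^sub>R w) * h (x + \<sigma> *\<^sub>R w) - g x * h x - \<sigma> * lin_coeff g h x w - \<sigma>\<^sup>2 * quad_coeff g h x w\<bar>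
      \<le> \<sigma>^3 * (C * ((1 + norm w)^6 * (jet_norm g x * jet_norm h x)))"
proof -
  obtain Kg Kh where "Kg \<ge> 0" "Kh \<ge> 0"
    and Kg: "\<And>x v. \<bar>g (x + v) - g x - dir_deriv g x v - hess_form g x v / 2\<bar> \<le> Kg * norm v ^ 3"
    and Kh: "\<And>x v. \<bar>h (x + v) - h x - dir_deriv h x v - hess_form h x v / 2\<bar> \<le> Kh * norm v ^ 3"
    using C3_bounded_third_taylor2[OF assms(1)] C3_bounded_third_taylor2[OF assms(2)] by blast
  define c where "c = (real CARD('n))\<^sup>2"
  show ?thesis
  proof (intro exI[of _ "3*c\<^sup>2 + 3*c*Kg + 3*c*Kh + Kg*Kh"] conjI allI impI)
    fix \<sigma> :: real and x w :: "real^'n"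
    assume \<sigma>: "0 < \<sigma>" "\<sigma> \<le> 1"
    define Yg where "Yg = (1 + norm w)^3 * jet_norm g x"
    define Yh where "Yh = (1 + norm w)^3 * jet_norm h x"
    note bg = abs_taylor_terms_le_jet_norm[where f = g and x = x and w = w, folded Yg_def c_def]
    note bh = abs_taylor_terms_le_jet_norm[where f = h and x = x and w = w, folded Yh_def c_def]
    have "Kg * norm (\<sigma> *\<^sub>R w) ^ 3 \<le> Kg * \<sigma>^3 * Yg" "Kh * norm (\<sigma> *\<^sub>R w) ^ 3 \<le> Kh * \<sigma>^3 * Yh"
      using bg(4) bh(4) \<sigma> \<open>Kg \<ge> 0\<close> \<open>Kh \<ge> 0\<close> by (simp_all add: power_mult_distrib mult.assoc mult_left_mono)
    then have "\<bar>g (x + \<sigma> *\<^sub>R w) - (g x + \<sigma> * dir_deriv g x w + \<sigma>\<^sup>2 * (hess_form g x w / 2))\<bar> \<le> Kg * \<sigma>^3 * Yg"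
      and "\<bar>h (x + \<sigma> *\<^sub>R w) - (h x + \<sigma> * dir_deriv h x w + \<sigma>\<^sup>2 * (hess_form h x w / 2))\<bar> \<le> Kh * \<sigma>^3 * Yh"
      using Kg[of x "\<sigma> *\<^sub>R w"] Kh[of x "\<sigma> *\<^sub>R w"] by (simp_all add: dir_deriv_scaleR hess_form_scaleR algebra_simps)
    moreover have "quad_coeff g h x w = dir_deriv g x w * dir_deriv h x w + g x * (hess_form h x w / 2)
        + hess_form g x w / 2 * h x"
      by (simp add: quad_coeff_def add_divide_distrib)
    ultimately have "\<bar>g (x + \<sigma> *\<^sub>R w) * h (x + \<sigma> *\<^sub>R w) - g x * h x - \<sigma> * lin_coeff g h x w - \<sigma>\<^sup>2 * quad_coeff g h x w\<bar>
        \<le> \<sigma>^3*(3*(c*Yg)*(c*Yh)) + (Kg*\<sigma>^3*Yg)*(3*(c*Yh) + Kh*\<sigma>^3*Yh) + 3*(c*Yg)*(Kh*\<sigma>^3*Yh)"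
      using abs_product_remainder_le[OF \<sigma> bg(1-3) bh(1-3)] unfolding lin_coeff_def by simp
    also have "\<dots> \<le> \<sigma>^3 * ((3*c\<^sup>2 + 3*c*Kg + 3*c*Kh + Kg*Kh) * (Yg * Yh))"
    proof -
      have "0 \<le> Kg*Kh*(Yg*Yh)"
        using \<open>Kg \<ge> 0\<close> \<open>Kh \<ge> 0\<close> one_le_jet_norm[of g x] one_le_jet_norm[of h x] by (simp add: Yg_def Yh_def)
      then have "\<sigma>^6 * (Kg*Kh*(Yg*Yh)) \<le> \<sigma>^3 * (Kg*Kh*(Yg*Yh))"
        using \<sigma> by (intro mult_right_mono power_decreasing) auto
      then show ?thesis by (simp add: algebra_simps power2_eq_square flip: power_add)
    qed
    also have "Yg * Yh = (1 + norm w)^6 * (jet_norm g x * jet_norm h x)"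
      by (simp add: Yg_def Yh_def algebra_simps flip: power_add)
    finally show "\<bar>g (x + \<sigma> *\<^sub>R w) * h (x + \<sigma> *\<^sub>R w) - g x * h x - \<sigma> * lin_coeff g h x w - \<sigma>\<^sup>2 * quad_coeff g h x w\<bar>
      \<le> \<sigma>^3 * ((3*c\<^sup>2 + 3*c*Kg + 3*c*Kh + Kg*Kh) * ((1 + norm w)^6 * (jet_norm g x * jet_norm h x)))" .
  qed (use \<open>Kg \<ge> 0\<close> \<open>Kh \<ge> 0\<close> in \<open>simp add: c_def\<close>)
qed

lemma vec_nth_borel_measurable [measurable (raw)]:
  "f \<in> borel_measurable N \<Longrightarrow> (\<lambda>x. (f x :: real^'n::finite) $ i) \<in> borel_measurable N"
  by (rule borel_measurable_continuous_on[of "\<lambda>v. v $ i"]) (auto intro: continuous_on_component continuous_on_id)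

lemma integrable_mult_of_squares:
  fixes f g :: "'a \<Rightarrow> real"
  assumes [measurable]: "f \<in> borel_measurable M" "g \<in> borel_measurable M"
    and "integrable M (\<lambda>x. (f x)\<^sup>2)" "integrable M (\<lambda>x. (g x)\<^sup>2)"
  shows "integrable M (\<lambda>x. f x * g x)"
proof (rule Bochner_Integration.integrable_bound[OF Bochner_Integration.integrable_add[OF assms(3,4)]])
  have "\<bar>f x * g x\<bar> \<le> (f x)\<^sup>2 + (g x)\<^sup>2" for x
    using sum_squares_bound[of "\<bar>f x\<bar>" "\<bar>g x\<bar>"] mult_nonneg_nonneg[OF abs_ge_zero abs_ge_zero, of "f x" "g x"]
    by (simp only: abs_mult power2_abs)
  then show "AE x in M. norm (f x * g x) \<le> norm ((f x)\<^sup>2 + (g x)\<^sup>2)" by simp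
qed measurable

lemma integral_second_order_quotient_bound:
  fixes F a b c e d :: "'a \<Rightarrow> real"
  assumes \<sigma>: "0 < \<sigma>"
    and F: "\<And>x. F x = a x + \<sigma> * b x + \<sigma>\<^sup>2 * c x + e x"
    and int: "integrable M a" "integrable M b" "integrable M c" "integrable M d"
    and b: "(\<integral>x. b x \<partial>M) = 0"
    and e: "e \<in> borel_measurable M" "\<And>x. \<bar>e x\<bar> \<le> \<sigma>^3 * d x"
  shows "integrable M F"
    and "\<bar>((\<integral>x. F x \<partial>M) - (\<integral>x. a x \<partial>M)) / \<sigma>\<^sup>2 - (\<integral>x. c x \<partial>M)\<bar> \<le> \<sigma> * (\<integral>x. d x \<partial>M)"
proof -
  have int_e: "integrable M e"
    by (rule Bochner_Integration.integrable_bound[where f = "\<lambda>x. \<sigma>^3 * d x"])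
      (use int(4) e in \<open>auto intro: order_trans[OF _ abs_ge_self]\<close>)
  show "integrable M F"
    unfolding F using int int_e by simp
  have "(\<integral>x. F x \<partial>M) = (\<integral>x. a x \<partial>M) + \<sigma>\<^sup>2 * (\<integral>x. c x \<partial>M) + (\<integral>x. e x \<partial>M)"
    unfolding F using int int_e b by simp
  then have "((\<integral>x. F x \<partial>M) - (\<integral>x. a x \<partial>M)) / \<sigma>\<^sup>2 - (\<integral>x. c x \<partial>M) = (\<integral>x. e x \<partial>M) / \<sigma>\<^sup>2"
    using \<sigma> by (simp add: field_simps)
  also have "\<bar>\<dots>\<bar> \<le> (\<integral>x. \<sigma>^3 * d x \<partial>M) / \<sigma>\<^sup>2"
  proof -
    have "(\<integral>x. \<bar>e x\<bar> \<partial>M) \<le> (\<integral>x. \<sigma>^3 * d x \<partial>M)"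
      using int_e int(4) e(2) by (intro integral_mono) auto
    from order_trans[OF integral_abs_bound this] show ?thesis
      by (simp add: abs_divide divide_right_mono)
  qed
  also have "\<dots> = \<sigma> * (\<integral>x. d x \<partial>M)"
    using \<sigma> by (simp add: power2_eq_square power3_eq_cube)
  finally show "\<bar>((\<integral>x. F x \<partial>M) - (\<integral>x. a x \<partial>M)) / \<sigma>\<^sup>2 - (\<integral>x. c x \<partial>M)\<bar> \<le> \<sigma> * (\<integral>x. d x \<partial>M)" .
qed

lemma (in prob_space) covar_eq_integral_mult_minus:
  assumes "integrable M U" "integrable M V" "integrable M (\<lambda>\<omega>. U \<omega> * V \<omega>)"
  shows "covar M U V = (\<integral>\<omega>. U \<omega> * V \<omega> \<partial>M) - (\<integral>\<omega>. U \<omega> \<partial>M) * (\<integral>\<omega>. V \<omega> \<partial>M)"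
proof -
  let ?a = "\<integral>\<omega>. U \<omega> \<partial>M" and ?b = "\<integral>\<omega>. V \<omega> \<partial>M"
  have "covar M U V = (\<integral>\<omega>. (U \<omega> * V \<omega> - ?a * V \<omega>) - (?b * U \<omega> - ?a * ?b) \<partial>M)"
    unfolding covar_def by (rule Bochner_Integration.integral_cong) (simp_all add: algebra_simps)
  also have "\<dots> = (\<integral>\<omega>. U \<omega> * V \<omega> \<partial>M) - ?a * ?b - (?b * ?a - ?a * ?b)"
    using assms by (simp add: prob_space)
  finally show ?thesis by (simp add: algebra_simps)
qed

lemma (in prob_space) covar_const_right: "covar M U (\<lambda>\<omega>. c) = 0"
  by (simp add: covar_def prob_space)

lemma tendsto_covariance_quotient:
  fixes A u v :: "real \<Rightarrow> real"
  assumes "((\<lambda>s. (A s - A0) / s) \<longlongrightarrow> \<alpha>) (at_right 0)"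
    and "((\<lambda>s. (u s - u0) / s) \<longlongrightarrow> \<beta>) (at_right 0)"
    and "((\<lambda>s. (v s - v0) / s) \<longlongrightarrow> \<gamma>) (at_right 0)"
  shows "((\<lambda>s. ((A s - u s * v s) - (A0 - u0 * v0)) / s) \<longlongrightarrow> \<alpha> - (\<beta> * v0 + u0 * \<gamma>)) (at_right 0)"
proof -
  have "((\<lambda>s. (A s - A0) / s - ((u s - u0) / s * (v0 + s * ((v s - v0) / s)) + u0 * ((v s - v0) / s)))
      \<longlongrightarrow> \<alpha> - (\<beta> * (v0 + 0 * \<gamma>) + u0 * \<gamma>)) (at_right 0)"
    by (intro tendsto_intros assms tendsto_ident_at)
  moreover have "\<forall>\<^sub>F s in at_right 0.
      (A s - A0) / s - ((u s - u0) / s * (v0 + s * ((v s - v0) / s)) + u0 * ((v s - v0) / s))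
      = ((A s - u s * v s) - (A0 - u0 * v0)) / s"
    by (simp add: eventually_at_right_less eventually_mono[OF eventually_at_right_less] field_simps)
  ultimately show ?thesis by (simp add: tendsto_cong)
qed

definition regular_estimator :: "'o measure \<Rightarrow> ('o \<Rightarrow> real^'n::finite) \<Rightarrow> (real^'n \<Rightarrow> real) \<Rightarrow> bool" where
  "regular_estimator M X g \<longleftrightarrow> C3_bounded_third g \<and> integrable M (\<lambda>\<omega>. (g (X \<omega>))\<^sup>2)
     \<and> (\<forall>i. integrable M (\<lambda>\<omega>. (partial_deriv i g (X \<omega>))\<^sup>2))
     \<and> (\<forall>i j. integrable M (\<lambda>\<omega>. (partial_deriv j (partial_deriv i g) (X \<omega>))\<^sup>2))"

lemma C3_bounded_third_borel_measurable:
  assumes "C3_bounded_third g"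
  shows "g \<in> borel_measurable borel" "partial_deriv i g \<in> borel_measurable borel"
    "partial_deriv j (partial_deriv i g) \<in> borel_measurable borel"
  using assms unfolding C3_bounded_third_def by (auto intro: borel_measurable_continuous_onI)

lemma partial_deriv_const [simp]: "partial_deriv i (\<lambda>x. c) = (\<lambda>x. 0)"
  by (simp add: partial_deriv_def fun_eq_iff)

lemma laplacian_const [simp]: "laplacian (\<lambda>x. c) = (\<lambda>x. 0)"
  by (simp add: laplacian_def fun_eq_iff)

lemma (in prob_space) regular_estimator_const: "regular_estimator M X (\<lambda>x. c)"
  by (simp add: regular_estimator_def C3_bounded_third_def has_partials_def)

lemma regular_estimatorD:
  assumes "regular_estimator M X g"
  shows "C3_bounded_third g" "integrable M (\<lambda>\<omega>. (g (X \<omega>))\<^sup>2)"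
    "integrable M (\<lambda>\<omega>. (partial_deriv i g (X \<omega>))\<^sup>2)"
    "integrable M (\<lambda>\<omega>. (partial_deriv j (partial_deriv i g) (X \<omega>))\<^sup>2)"
  using assms unfolding regular_estimator_def by blast+

locale isotropic_noise = prob_space M for M :: "'o measure" +
  fixes X W :: "'o \<Rightarrow> real^'n::finite"
  assumes X_borel [measurable]: "X \<in> borel_measurable M"
    and W_borel [measurable]: "W \<in> borel_measurable M"
    and indep_X_W: "indep_var borel X borel W"
    and W_mean: "\<And>i. (\<integral>\<omega>. W \<omega> $ i \<partial>M) = 0"
    and W_covar: "\<And>i j. covar M (\<lambda>\<omega>. W \<omega> $ i) (\<lambda>\<omega>. W \<omega> $ j) = (if i = j then 1 else 0)"
    and W_moments: "\<And>k::nat. integrable M (\<lambda>\<omega>. norm (W \<omega>) ^ k)"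
begin

lemma integrable_integral_indep_mult:
  fixes \<phi> \<psi> :: "real^'n \<Rightarrow> real"
  assumes [measurable]: "\<phi> \<in> borel_measurable borel" "\<psi> \<in> borel_measurable borel"
    and "integrable M (\<lambda>\<omega>. \<phi> (X \<omega>))" "integrable M (\<lambda>\<omega>. \<psi> (W \<omega>))"
  shows "integrable M (\<lambda>\<omega>. \<psi> (W \<omega>) * \<phi> (X \<omega>))"
    and "(\<integral>\<omega>. \<psi> (W \<omega>) * \<phi> (X \<omega>) \<partial>M) = (\<integral>\<omega>. \<psi> (W \<omega>) \<partial>M) * (\<integral>\<omega>. \<phi> (X \<omega>) \<partial>M)"
proof -
  have indep: "indep_var borel (\<lambda>\<omega>. \<phi> (X \<omega>)) borel (\<lambda>\<omega>. \<psi> (W \<omega>))"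
    using indep_var_compose[OF indep_X_W assms(1,2)] by (simp add: comp_def)
  show "integrable M (\<lambda>\<omega>. \<psi> (W \<omega>) * \<phi> (X \<omega>))"
    using indep_var_integrable[OF indep assms(3,4)] by (simp add: mult.commute)
  show "(\<integral>\<omega>. \<psi> (W \<omega>) * \<phi> (X \<omega>) \<partial>M) = (\<integral>\<omega>. \<psi> (W \<omega>) \<partial>M) * (\<integral>\<omega>. \<phi> (X \<omega>) \<partial>M)"
    using indep_var_lebesgue_integral[OF indep assms(3,4)] by (simp add: mult.commute)
qed

lemma integrable_polynomially_bounded_W:
  fixes \<psi> :: "real^'n \<Rightarrow> real"
  assumes [measurable]: "\<psi> \<in> borel_measurable borel" and bound: "\<And>w. \<bar>\<psi> w\<bar> \<le> C * (1 + norm w) ^ k"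
  shows "integrable M (\<lambda>\<omega>. \<psi> (W \<omega>))"
proof (rule Bochner_Integration.integrable_bound)
  have "(\<lambda>\<omega>. (1 + norm (W \<omega>)) ^ k) = (\<lambda>\<omega>. \<Sum>i\<le>k. of_nat (k choose i) * norm (W \<omega>) ^ i)"
  proof
    fix \<omega>
    show "(1 + norm (W \<omega>)) ^ k = (\<Sum>i\<le>k. of_nat (k choose i) * norm (W \<omega>) ^ i)"
      using binomial_ring[of "norm (W \<omega>)" 1 k] by (simp add: add.commute)
  qed
  then have "integrable M (\<lambda>\<omega>. (1 + norm (W \<omega>)) ^ k)"
    using W_moments by simp
  then show "integrable M (\<lambda>\<omega>. C * (1 + norm (W \<omega>)) ^ k)"
    by simp
  show "AE \<omega> in M. norm (\<psi> (W \<omega>)) \<le> norm (C * (1 + norm (W \<omega>)) ^ k)"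
    using bound by (auto intro: order_trans[OF _ abs_ge_self])
qed measurable

lemma integral_W_component_mult: "(\<integral>\<omega>. W \<omega> $ i * W \<omega> $ j \<partial>M) = (if i = j then 1 else 0)"
  using W_covar[of i j] by (simp add: covar_def W_mean)

lemma integrable_integral_W_linear_form:
  fixes \<phi> :: "'n \<Rightarrow> real^'n \<Rightarrow> real"
  assumes [measurable]: "\<And>i. \<phi> i \<in> borel_measurable borel"
    and int: "\<And>i. integrable M (\<lambda>\<omega>. \<phi> i (X \<omega>))"
  shows "integrable M (\<lambda>\<omega>. \<Sum>i\<in>UNIV. W \<omega> $ i * \<phi> i (X \<omega>))"
    and "(\<integral>\<omega>. (\<Sum>i\<in>UNIV. W \<omega> $ i * \<phi> i (X \<omega>)) \<partial>M) = 0"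
proof -
  have W: "integrable M (\<lambda>\<omega>. W \<omega> $ i)" for i
    by (rule integrable_polynomially_bounded_W[where C = 1 and k = 1])
      (auto intro: order_trans[OF component_le_norm_cart])
  note indep = integrable_integral_indep_mult[of "\<phi> i" "\<lambda>w. w $ i" for i, OF _ _ int W]
  show "integrable M (\<lambda>\<omega>. \<Sum>i\<in>UNIV. W \<omega> $ i * \<phi> i (X \<omega>))"
    using indep(1) by simp
  show "(\<integral>\<omega>. (\<Sum>i\<in>UNIV. W \<omega> $ i * \<phi> i (X \<omega>)) \<partial>M) = 0"
    using indep by (simp add: W_mean)
qed

lemma integrable_integral_W_quadratic_form:
  fixes \<phi> :: "'n \<Rightarrow> 'n \<Rightarrow> real^'n \<Rightarrow> real"
  assumes [measurable]: "\<And>i j. \<phi> i j \<in> borel_measurable borel"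
    and int: "\<And>i j. integrable M (\<lambda>\<omega>. \<phi> i j (X \<omega>))"
  shows "integrable M (\<lambda>\<omega>. \<Sum>i\<in>UNIV. \<Sum>j\<in>UNIV. (W \<omega> $ i * W \<omega> $ j) * \<phi> i j (X \<omega>))"
    and "(\<integral>\<omega>. (\<Sum>i\<in>UNIV. \<Sum>j\<in>UNIV. (W \<omega> $ i * W \<omega> $ j) * \<phi> i j (X \<omega>)) \<partial>M)
      = (\<Sum>i\<in>UNIV. \<integral>\<omega>. \<phi> i i (X \<omega>) \<partial>M)"
proof -
  have WW: "integrable M (\<lambda>\<omega>. W \<omega> $ i * W \<omega> $ j)" for i j
  proof (rule integrable_polynomially_bounded_W[where C = 1 and k = 2])
    fix w :: "real^'n"
    have "\<bar>w $ i\<bar> \<le> 1 + norm w" "\<bar>w $ j\<bar> \<le> 1 + norm w"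
      by (auto intro: order_trans[OF component_le_norm_cart])
    then show "\<bar>w $ i * w $ j\<bar> \<le> 1 * (1 + norm w) ^ 2"
      using mult_mono[of "\<bar>w $ i\<bar>" "1 + norm w" "\<bar>w $ j\<bar>" "1 + norm w"]
      by (simp add: abs_mult power2_eq_square)
  qed measurable
  note indep = integrable_integral_indep_mult[of "\<phi> i j" "\<lambda>w. w $ i * w $ j" for i j, OF _ _ int WW]
  show "integrable M (\<lambda>\<omega>. \<Sum>i\<in>UNIV. \<Sum>j\<in>UNIV. (W \<omega> $ i * W \<omega> $ j) * \<phi> i j (X \<omega>))"
    using indep(1) by simp
  show "(\<integral>\<omega>. (\<Sum>i\<in>UNIV. \<Sum>j\<in>UNIV. (W \<omega> $ i * W \<omega> $ j) * \<phi> i j (X \<omega>)) \<partial>M)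
      = (\<Sum>i\<in>UNIV. \<integral>\<omega>. \<phi> i i (X \<omega>) \<partial>M)"
    using indep by (simp add: integral_W_component_mult if_distrib[of "\<lambda>c. c * _"] cong: if_cong)
qed

end

locale regular_pair = isotropic_noise +
  fixes g h :: "real^'n \<Rightarrow> real"
  assumes g_regular: "regular_estimator M X g" and h_regular: "regular_estimator M X h"
begin

lemmas borel_measurable_derivs [measurable] =
  C3_bounded_third_borel_measurable[OF regular_estimatorD(1)[OF g_regular]]
  C3_bounded_third_borel_measurable[OF regular_estimatorD(1)[OF h_regular]]

lemmas square_integrable_derivs =
  regular_estimatorD(2-4)[OF g_regular] regular_estimatorD(2-4)[OF h_regular]

lemma jet_norm_borel_measurable [measurable]:
  "jet_norm g \<in> borel_measurable borel" "jet_norm h \<in> borel_measurable borel"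
  unfolding jet_norm_def by measurable

lemma integrable_jet_norm_mult: "integrable M (\<lambda>\<omega>. jet_norm g (X \<omega>) * jet_norm h (X \<omega>))"
proof (rule integrable_mult_of_squares)
  show "integrable M (\<lambda>\<omega>. (jet_norm g (X \<omega>))\<^sup>2)" "integrable M (\<lambda>\<omega>. (jet_norm h (X \<omega>))\<^sup>2)"
    unfolding jet_norm_squared using square_integrable_derivs by simp_all
qed measurable

lemma integrable_mult_derivs:
  "integrable M (\<lambda>\<omega>. g (X \<omega>) * h (X \<omega>))"
  "integrable M (\<lambda>\<omega>. g (X \<omega>) * partial_deriv i h (X \<omega>))"
  "integrable M (\<lambda>\<omega>. partial_deriv i g (X \<omega>) * h (X \<omega>))"
  "integrable M (\<lambda>\<omega>. partial_deriv i g (X \<omega>) * partial_deriv j h (X \<omega>))"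
  "integrable M (\<lambda>\<omega>. g (X \<omega>) * partial_deriv j (partial_deriv i h) (X \<omega>))"
  "integrable M (\<lambda>\<omega>. partial_deriv j (partial_deriv i g) (X \<omega>) * h (X \<omega>))"
  subgoal by (rule integrable_mult_of_squares[OF _ _ square_integrable_derivs(1,4)]) measurable
  subgoal by (rule integrable_mult_of_squares[OF _ _ square_integrable_derivs(1,5)]) measurable
  subgoal by (rule integrable_mult_of_squares[OF _ _ square_integrable_derivs(2,4)]) measurable
  subgoal by (rule integrable_mult_of_squares[OF _ _ square_integrable_derivs(2,5)]) measurable
  subgoal by (rule integrable_mult_of_squares[OF _ _ square_integrable_derivs(1,6)]) measurable
  subgoal by (rule integrable_mult_of_squares[OF _ _ square_integrable_derivs(3,4)]) measurable
  done

lemma lin_coeff_integral: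
  "integrable M (\<lambda>\<omega>. lin_coeff g h (X \<omega>) (W \<omega>))" "(\<integral>\<omega>. lin_coeff g h (X \<omega>) (W \<omega>) \<partial>M) = 0"
proof -
  define \<phi> where "\<phi> i x = g x * partial_deriv i h x + partial_deriv i g x * h x" for i x
  have [measurable]: "\<phi> i \<in> borel_measurable borel" for i
    unfolding \<phi>_def by measurable
  have int: "integrable M (\<lambda>\<omega>. \<phi> i (X \<omega>))" for i
    unfolding \<phi>_def using integrable_mult_derivs(2,3) by (rule Bochner_Integration.integrable_add)
  have "lin_coeff g h x w = (\<Sum>i\<in>UNIV. w $ i * \<phi> i x)" for x w
    unfolding lin_coeff_def dir_deriv_def \<phi>_def sum_distrib_left sum_distrib_right sum.distrib[symmetric]
    by (rule sum.cong) (simp_all add: algebra_simps)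
  then have eq: "(\<lambda>\<omega>. lin_coeff g h (X \<omega>) (W \<omega>)) = (\<lambda>\<omega>. \<Sum>i\<in>UNIV. W \<omega> $ i * \<phi> i (X \<omega>))"
    by simp
  show "integrable M (\<lambda>\<omega>. lin_coeff g h (X \<omega>) (W \<omega>))" "(\<integral>\<omega>. lin_coeff g h (X \<omega>) (W \<omega>) \<partial>M) = 0"
    unfolding eq by (rule integrable_integral_W_linear_form[OF _ int]; measurable)+
qed

lemma quad_coeff_integral:
  "integrable M (\<lambda>\<omega>. quad_coeff g h (X \<omega>) (W \<omega>))"
  "(\<integral>\<omega>. quad_coeff g h (X \<omega>) (W \<omega>) \<partial>M)
     = (\<integral>\<omega>. (\<Sum>i\<in>UNIV. partial_deriv i g (X \<omega>) * partial_deriv i h (X \<omega>)) \<partial>M)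
       + ((\<integral>\<omega>. g (X \<omega>) * laplacian h (X \<omega>) \<partial>M) + (\<integral>\<omega>. laplacian g (X \<omega>) * h (X \<omega>) \<partial>M)) / 2"
proof -
  define \<phi> where "\<phi> i j x = partial_deriv i g x * partial_deriv j h x
    + (g x * partial_deriv j (partial_deriv i h) x + partial_deriv j (partial_deriv i g) x * h x) / 2" for i j x
  have quad: "quad_coeff g h x w = (\<Sum>i\<in>UNIV. \<Sum>j\<in>UNIV. (w $ i * w $ j) * \<phi> i j x)" for x w
  proof -
    have "dir_deriv g x w * dir_deriv h x w
        = (\<Sum>i\<in>UNIV. \<Sum>j\<in>UNIV. (w $ i * w $ j) * (partial_deriv i g x * partial_deriv j h x))"
      unfolding dir_deriv_def sum_product by (simp add: algebra_simps)
    moreover have "g x * hess_form h x w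
        = (\<Sum>i\<in>UNIV. \<Sum>j\<in>UNIV. (w $ i * w $ j) * (g x * partial_deriv j (partial_deriv i h) x))"
      unfolding hess_form_def dir_deriv_def by (simp add: sum_distrib_left algebra_simps)
    moreover have "hess_form g x w * h x
        = (\<Sum>i\<in>UNIV. \<Sum>j\<in>UNIV. (w $ i * w $ j) * (partial_deriv j (partial_deriv i g) x * h x))"
      unfolding hess_form_def dir_deriv_def by (simp add: sum_distrib_left sum_distrib_right algebra_simps)
    ultimately show ?thesis
      unfolding quad_coeff_def \<phi>_def
      by (simp add: sum.distrib sum_divide_distrib add_divide_distrib distrib_left)
  qed
  have int: "integrable M (\<lambda>\<omega>. \<phi> i j (X \<omega>))" for i j
    unfolding \<phi>_def using integrable_mult_derivs by simp
  show "integrable M (\<lambda>\<omega>. quad_coeff g h (X \<omega>) (W \<omega>))"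
    unfolding quad using integrable_integral_W_quadratic_form(1)[OF _ int] unfolding \<phi>_def by simp
  have "(\<integral>\<omega>. quad_coeff g h (X \<omega>) (W \<omega>) \<partial>M) = (\<Sum>i\<in>UNIV. \<integral>\<omega>. \<phi> i i (X \<omega>) \<partial>M)"
    unfolding quad using integrable_integral_W_quadratic_form(2)[OF _ int] unfolding \<phi>_def by simp
  also have "\<dots> = (\<Sum>i\<in>UNIV. (\<integral>\<omega>. partial_deriv i g (X \<omega>) * partial_deriv i h (X \<omega>) \<partial>M)
      + ((\<integral>\<omega>. g (X \<omega>) * partial_deriv i (partial_deriv i h) (X \<omega>) \<partial>M)
         + (\<integral>\<omega>. partial_deriv i (partial_deriv i g) (X \<omega>) * h (X \<omega>) \<partial>M)) / 2)"
    unfolding \<phi>_def using integrable_mult_derivs by simp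
  also have "\<dots> = (\<integral>\<omega>. (\<Sum>i\<in>UNIV. partial_deriv i g (X \<omega>) * partial_deriv i h (X \<omega>)) \<partial>M)
       + ((\<integral>\<omega>. g (X \<omega>) * laplacian h (X \<omega>) \<partial>M) + (\<integral>\<omega>. laplacian g (X \<omega>) * h (X \<omega>) \<partial>M)) / 2"
    unfolding laplacian_def using integrable_mult_derivs
    by (simp add: sum.distrib sum_divide_distrib sum_distrib_left sum_distrib_right add_divide_distrib)
  finally show "(\<integral>\<omega>. quad_coeff g h (X \<omega>) (W \<omega>) \<partial>M)
     = (\<integral>\<omega>. (\<Sum>i\<in>UNIV. partial_deriv i g (X \<omega>) * partial_deriv i h (X \<omega>)) \<partial>M)
       + ((\<integral>\<omega>. g (X \<omega>) * laplacian h (X \<omega>) \<partial>M) + (\<integral>\<omega>. laplacian g (X \<omega>) * h (X \<omega>) \<partial>M)) / 2" .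
qed


lemma perturbed_product_quotient_bound:
  "\<exists>D. \<forall>s. 0 < s \<and> s \<le> 1 \<longrightarrow>
      integrable M (\<lambda>\<omega>. g (X \<omega> + sqrt s *\<^sub>R W \<omega>) * h (X \<omega> + sqrt s *\<^sub>R W \<omega>)) \<and>
      \<bar>((\<integral>\<omega>. g (X \<omega> + sqrt s *\<^sub>R W \<omega>) * h (X \<omega> + sqrt s *\<^sub>R W \<omega>) \<partial>M) - (\<integral>\<omega>. g (X \<omega>) * h (X \<omega>) \<partial>M)) / s
        - (\<integral>\<omega>. quad_coeff g h (X \<omega>) (W \<omega>) \<partial>M)\<bar> \<le> sqrt s * D"
proof -
  obtain C where C: "\<And>\<sigma> x w. 0 < \<sigma> \<Longrightarrow> \<sigma> \<le> 1 \<Longrightarrow>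
    \<bar>g (x + \<sigma> *\<^sub>R w) * h (x + \<sigma> *\<^sub>R w) - g x * h x - \<sigma> * lin_coeff g h x w - \<sigma>\<^sup>2 * quad_coeff g h x w\<bar>
      \<le> \<sigma>^3 * (C * ((1 + norm w)^6 * (jet_norm g x * jet_norm h x)))"
    using C3_bounded_third_product_taylor2[OF regular_estimatorD(1)[OF g_regular] regular_estimatorD(1)[OF h_regular]]
    by blast
  define envelope where "envelope \<omega> = C * ((1 + norm (W \<omega>))^6 * (jet_norm g (X \<omega>) * jet_norm h (X \<omega>)))" for \<omega>
  have "integrable M (\<lambda>\<omega>. (1 + norm (W \<omega>))^6 * (jet_norm g (X \<omega>) * jet_norm h (X \<omega>)))"
    by (rule integrable_integral_indep_mult(1)[OF _ _ integrable_jet_norm_mult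
          integrable_polynomially_bounded_W[where C = 1 and k = 6]]) auto
  then have envelope: "integrable M envelope"
    unfolding envelope_def by simp
  show ?thesis
  proof (intro exI allI impI conjI)
    fix s :: real assume s: "0 < s \<and> s \<le> 1"
    let ?\<sigma> = "sqrt s"
    note expansion = integral_second_order_quotient_bound[where \<sigma> = ?\<sigma>
        and a = "\<lambda>\<omega>. g (X \<omega>) * h (X \<omega>)" and b = "\<lambda>\<omega>. lin_coeff g h (X \<omega>) (W \<omega>)"
        and c = "\<lambda>\<omega>. quad_coeff g h (X \<omega>) (W \<omega>)" and d = envelope
        and e = "\<lambda>\<omega>. g (X \<omega> + ?\<sigma> *\<^sub>R W \<omega>) * h (X \<omega> + ?\<sigma> *\<^sub>R W \<omega>) - g (X \<omega>) * h (X \<omega>)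
          - ?\<sigma> * lin_coeff g h (X \<omega>) (W \<omega>) - ?\<sigma>\<^sup>2 * quad_coeff g h (X \<omega>) (W \<omega>)"
        and F = "\<lambda>\<omega>. g (X \<omega> + ?\<sigma> *\<^sub>R W \<omega>) * h (X \<omega> + ?\<sigma> *\<^sub>R W \<omega>)",
        OF _ _ integrable_mult_derivs(1) lin_coeff_integral(1) quad_coeff_integral(1) envelope lin_coeff_integral(2)]
    have "?\<sigma> \<le> 1" "0 < ?\<sigma>" "s \<le> 1" "0 < s" using s by auto
    moreover have "(\<lambda>\<omega>. lin_coeff g h (X \<omega>) (W \<omega>)) \<in> borel_measurable M"
      "(\<lambda>\<omega>. quad_coeff g h (X \<omega>) (W \<omega>)) \<in> borel_measurable M"
      unfolding lin_coeff_def quad_coeff_def dir_deriv_def hess_form_def by measurable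
    ultimately show "integrable M (\<lambda>\<omega>. g (X \<omega> + ?\<sigma> *\<^sub>R W \<omega>) * h (X \<omega> + ?\<sigma> *\<^sub>R W \<omega>))"
      and "\<bar>((\<integral>\<omega>. g (X \<omega> + ?\<sigma> *\<^sub>R W \<omega>) * h (X \<omega> + ?\<sigma> *\<^sub>R W \<omega>) \<partial>M) - (\<integral>\<omega>. g (X \<omega>) * h (X \<omega>) \<partial>M)) / s
        - (\<integral>\<omega>. quad_coeff g h (X \<omega>) (W \<omega>) \<partial>M)\<bar> \<le> ?\<sigma> * (\<integral>\<omega>. envelope \<omega> \<partial>M)"
      using expansion C[of ?\<sigma>] unfolding envelope_def by (simp_all add: mult.assoc)
  qed
qed

lemma perturbed_product_limit:
  "\<forall>\<^sub>F s in at_right 0. integrable M (\<lambda>\<omega>. g (X \<omega> + sqrt s *\<^sub>R W \<omega>) * h (X \<omega> + sqrt s *\<^sub>R W \<omega>))"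
  "((\<lambda>s. ((\<integral>\<omega>. g (X \<omega> + sqrt s *\<^sub>R W \<omega>) * h (X \<omega> + sqrt s *\<^sub>R W \<omega>) \<partial>M) - (\<integral>\<omega>. g (X \<omega>) * h (X \<omega>) \<partial>M)) / s)
     \<longlongrightarrow> (\<integral>\<omega>. quad_coeff g h (X \<omega>) (W \<omega>) \<partial>M)) (at_right 0)"
proof -
  obtain D where D: "\<forall>s. 0 < s \<and> s \<le> 1 \<longrightarrow>
      integrable M (\<lambda>\<omega>. g (X \<omega> + sqrt s *\<^sub>R W \<omega>) * h (X \<omega> + sqrt s *\<^sub>R W \<omega>)) \<and>
      \<bar>((\<integral>\<omega>. g (X \<omega> + sqrt s *\<^sub>R W \<omega>) * h (X \<omega> + sqrt s *\<^sub>R W \<omega>) \<partial>M) - (\<integral>\<omega>. g (X \<omega>) * h (X \<omega>) \<partial>M)) / s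
        - (\<integral>\<omega>. quad_coeff g h (X \<omega>) (W \<omega>) \<partial>M)\<bar> \<le> sqrt s * D"
    by (rule exE[OF perturbed_product_quotient_bound])
  have small: "\<forall>\<^sub>F s in at_right (0::real). 0 < s \<and> s \<le> 1"
    unfolding eventually_at_right_field by (intro exI[of _ 1]) auto
  then show "\<forall>\<^sub>F s in at_right 0. integrable M (\<lambda>\<omega>. g (X \<omega> + sqrt s *\<^sub>R W \<omega>) * h (X \<omega> + sqrt s *\<^sub>R W \<omega>))"
    by (rule eventually_mono) (simp add: D)
  have "((\<lambda>s. sqrt s * D) \<longlongrightarrow> sqrt 0 * D) (at_right 0)"
    by (intro tendsto_intros)
  then have vanishing: "((\<lambda>s. sqrt s * D) \<longlongrightarrow> 0) (at_right 0)" by simp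
  have bound: "\<forall>\<^sub>F s in at_right 0.
      norm (((\<integral>\<omega>. g (X \<omega> + sqrt s *\<^sub>R W \<omega>) * h (X \<omega> + sqrt s *\<^sub>R W \<omega>) \<partial>M) - (\<integral>\<omega>. g (X \<omega>) * h (X \<omega>) \<partial>M)) / s
        - (\<integral>\<omega>. quad_coeff g h (X \<omega>) (W \<omega>) \<partial>M)) \<le> sqrt s * D"
    using small by (rule eventually_mono) (simp add: D)
  show "((\<lambda>s. ((\<integral>\<omega>. g (X \<omega> + sqrt s *\<^sub>R W \<omega>) * h (X \<omega> + sqrt s *\<^sub>R W \<omega>) \<partial>M) - (\<integral>\<omega>. g (X \<omega>) * h (X \<omega>) \<partial>M)) / s)
     \<longlongrightarrow> (\<integral>\<omega>. quad_coeff g h (X \<omega>) (W \<omega>) \<partial>M)) (at_right 0)"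
    using Lim_null_comparison[OF bound vanishing] by (rule LIM_zero_cancel)
qed

lemma integrable_laplacian:
  "integrable M (\<lambda>\<omega>. laplacian g (X \<omega>))" "integrable M (\<lambda>\<omega>. laplacian h (X \<omega>))"
  "integrable M (\<lambda>\<omega>. g (X \<omega>) * laplacian h (X \<omega>))" "integrable M (\<lambda>\<omega>. laplacian g (X \<omega>) * h (X \<omega>))"
proof -
  have "integrable M (\<lambda>\<omega>. partial_deriv i (partial_deriv i f) (X \<omega>))"
    if "integrable M (\<lambda>\<omega>. (partial_deriv i (partial_deriv i f) (X \<omega>))\<^sup>2)"
      "partial_deriv i (partial_deriv i f) \<in> borel_measurable borel" for f i
    by (rule square_integrable_imp_integrable[OF _ that(1)]) (use that(2) in measurable)
  then show "integrable M (\<lambda>\<omega>. laplacian g (X \<omega>))" "integrable M (\<lambda>\<omega>. laplacian h (X \<omega>))"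
    unfolding laplacian_def using square_integrable_derivs by simp_all
  show "integrable M (\<lambda>\<omega>. g (X \<omega>) * laplacian h (X \<omega>))" "integrable M (\<lambda>\<omega>. laplacian g (X \<omega>) * h (X \<omega>))"
    unfolding laplacian_def sum_distrib_left sum_distrib_right using integrable_mult_derivs by simp_all
qed

end

lemma (in isotropic_noise) regular_pairI:
  "regular_estimator M X g \<Longrightarrow> regular_estimator M X h \<Longrightarrow> regular_pair M X W g h"
  by (simp add: regular_pair_def regular_pair_axioms_def isotropic_noise_axioms)

text \<open>The means are the second moments against the constant \<open>1\<close>.\<close>
lemma (in isotropic_noise) covar_perturbed_limit:
  assumes g: "regular_estimator M X g" and h: "regular_estimator M X h"
  shows "((\<lambda>s. (covar M (\<lambda>\<omega>. g (X \<omega> + sqrt s *\<^sub>R W \<omega>)) (\<lambda>\<omega>. h (X \<omega> + sqrt s *\<^sub>R W \<omega>))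
              - covar M (\<lambda>\<omega>. g (X \<omega>)) (\<lambda>\<omega>. h (X \<omega>))) / s)
          \<longlongrightarrow> (\<integral>\<omega>. (\<Sum>i\<in>UNIV. partial_deriv i g (X \<omega>) * partial_deriv i h (X \<omega>)) \<partial>M)
            + (1/2) * (covar M (\<lambda>\<omega>. g (X \<omega>)) (\<lambda>\<omega>. laplacian h (X \<omega>))
                     + covar M (\<lambda>\<omega>. h (X \<omega>)) (\<lambda>\<omega>. laplacian g (X \<omega>)))) (at_right 0)"
proof -
  interpret gh: regular_pair M X W g h by (rule regular_pairI[OF g h])
  interpret g1: regular_pair M X W g "\<lambda>_. 1" by (rule regular_pairI[OF g regular_estimator_const])
  interpret h1: regular_pair M X W h "\<lambda>_. 1" by (rule regular_pairI[OF h regular_estimator_const])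
  let ?g = "\<lambda>s \<omega>. g (X \<omega> + sqrt s *\<^sub>R W \<omega>)" and ?h = "\<lambda>s \<omega>. h (X \<omega> + sqrt s *\<^sub>R W \<omega>)"
  have "((\<lambda>s. (((\<integral>\<omega>. ?g s \<omega> * ?h s \<omega> \<partial>M) - (\<integral>\<omega>. ?g s \<omega> \<partial>M) * (\<integral>\<omega>. ?h s \<omega> \<partial>M))
       - ((\<integral>\<omega>. g (X \<omega>) * h (X \<omega>) \<partial>M) - (\<integral>\<omega>. g (X \<omega>) \<partial>M) * (\<integral>\<omega>. h (X \<omega>) \<partial>M))) / s)
      \<longlongrightarrow> (\<integral>\<omega>. quad_coeff g h (X \<omega>) (W \<omega>) \<partial>M)
        - ((\<integral>\<omega>. quad_coeff g (\<lambda>_. 1) (X \<omega>) (W \<omega>) \<partial>M) * (\<integral>\<omega>. h (X \<omega>) \<partial>M)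
          + (\<integral>\<omega>. g (X \<omega>) \<partial>M) * (\<integral>\<omega>. quad_coeff h (\<lambda>_. 1) (X \<omega>) (W \<omega>) \<partial>M))) (at_right 0)"
    using tendsto_covariance_quotient[OF gh.perturbed_product_limit(2) g1.perturbed_product_limit(2)
        h1.perturbed_product_limit(2)] by simp
  moreover have "\<forall>\<^sub>F s in at_right 0.
      (((\<integral>\<omega>. ?g s \<omega> * ?h s \<omega> \<partial>M) - (\<integral>\<omega>. ?g s \<omega> \<partial>M) * (\<integral>\<omega>. ?h s \<omega> \<partial>M))
       - ((\<integral>\<omega>. g (X \<omega>) * h (X \<omega>) \<partial>M) - (\<integral>\<omega>. g (X \<omega>) \<partial>M) * (\<integral>\<omega>. h (X \<omega>) \<partial>M))) / s
    = (covar M (?g s) (?h s) - covar M (\<lambda>\<omega>. g (X \<omega>)) (\<lambda>\<omega>. h (X \<omega>))) / s"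
    using gh.perturbed_product_limit(1) g1.perturbed_product_limit(1) h1.perturbed_product_limit(1)
  proof eventually_elim
    case (elim s)
    then show ?case
      using covar_eq_integral_mult_minus[of "?g s" "?h s"]
        covar_eq_integral_mult_minus[OF g1.integrable_mult_derivs(1)[simplified] h1.integrable_mult_derivs(1)[simplified]
          gh.integrable_mult_derivs(1)]
      by simp
  qed
  ultimately have lim: "((\<lambda>s. (covar M (?g s) (?h s) - covar M (\<lambda>\<omega>. g (X \<omega>)) (\<lambda>\<omega>. h (X \<omega>))) / s)
      \<longlongrightarrow> (\<integral>\<omega>. quad_coeff g h (X \<omega>) (W \<omega>) \<partial>M)
        - ((\<integral>\<omega>. quad_coeff g (\<lambda>_. 1) (X \<omega>) (W \<omega>) \<partial>M) * (\<integral>\<omega>. h (X \<omega>) \<partial>M)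
          + (\<integral>\<omega>. g (X \<omega>) \<partial>M) * (\<integral>\<omega>. quad_coeff h (\<lambda>_. 1) (X \<omega>) (W \<omega>) \<partial>M))) (at_right 0)"
    by (rule Lim_transform_eventually)
  have "covar M (\<lambda>\<omega>. g (X \<omega>)) (\<lambda>\<omega>. laplacian h (X \<omega>))
      = (\<integral>\<omega>. g (X \<omega>) * laplacian h (X \<omega>) \<partial>M) - (\<integral>\<omega>. g (X \<omega>) \<partial>M) * (\<integral>\<omega>. laplacian h (X \<omega>) \<partial>M)"
    "covar M (\<lambda>\<omega>. h (X \<omega>)) (\<lambda>\<omega>. laplacian g (X \<omega>))
      = (\<integral>\<omega>. laplacian g (X \<omega>) * h (X \<omega>) \<partial>M) - (\<integral>\<omega>. h (X \<omega>) \<partial>M) * (\<integral>\<omega>. laplacian g (X \<omega>) \<partial>M)"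
    using covar_eq_integral_mult_minus[OF g1.integrable_mult_derivs(1)[simplified] gh.integrable_laplacian(2,3)]
      covar_eq_integral_mult_minus[OF h1.integrable_mult_derivs(1)[simplified] gh.integrable_laplacian(1)]
      gh.integrable_laplacian(4)
    by (simp_all add: mult.commute)
  then have "(\<integral>\<omega>. quad_coeff g h (X \<omega>) (W \<omega>) \<partial>M)
        - ((\<integral>\<omega>. quad_coeff g (\<lambda>_. 1) (X \<omega>) (W \<omega>) \<partial>M) * (\<integral>\<omega>. h (X \<omega>) \<partial>M)
          + (\<integral>\<omega>. g (X \<omega>) \<partial>M) * (\<integral>\<omega>. quad_coeff h (\<lambda>_. 1) (X \<omega>) (W \<omega>) \<partial>M))
      = (\<integral>\<omega>. (\<Sum>i\<in>UNIV. partial_deriv i g (X \<omega>) * partial_deriv i h (X \<omega>)) \<partial>M)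
            + (1/2) * (covar M (\<lambda>\<omega>. g (X \<omega>)) (\<lambda>\<omega>. laplacian h (X \<omega>))
                     + covar M (\<lambda>\<omega>. h (X \<omega>)) (\<lambda>\<omega>. laplacian g (X \<omega>)))"
    unfolding gh.quad_coeff_integral(2) g1.quad_coeff_integral(2) h1.quad_coeff_integral(2)
    by (simp add: algebra_simps)
  with lim show ?thesis by simp
qed

theorem mainTheorem6:
  fixes M :: "'o measure"
    and X W :: "'o \<Rightarrow> real^'n::finite"
    and f :: "'m::finite \<Rightarrow> real^'n \<Rightarrow> real"
  assumes M: "prob_space M"
    and X: "X \<in> borel_measurable M"
    and W: "W \<in> borel_measurable M"
    and indep: "prob_space.indep_var M borel X borel W"
    and smooth: "\<And>a. C3_bounded_third (f a)"
    and mom0: "\<And>a. integrable M (\<lambda>\<omega>. (f a (X \<omega>))\<^sup>2)"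
    and mom1: "\<And>a i. integrable M (\<lambda>\<omega>. (partial_deriv i (f a) (X \<omega>))\<^sup>2)"
    and mom2: "\<And>a i j. integrable M (\<lambda>\<omega>. (partial_deriv j (partial_deriv i (f a)) (X \<omega>))\<^sup>2)"
    and W_mean: "\<And>i. (\<integral>\<omega>. W \<omega> $ i \<partial>M) = 0"
    and W_var: "\<And>i j. covar M (\<lambda>\<omega>. W \<omega> $ i) (\<lambda>\<omega>. W \<omega> $ j) = (if i = j then 1 else 0)"
    and W_moments: "\<And>k::nat. integrable M (\<lambda>\<omega>. norm (W \<omega>) ^ k)"
  shows "(\<forall>a b.
           ((\<lambda>s. (covar M (\<lambda>\<omega>. f a (X \<omega> + sqrt s *\<^sub>R W \<omega>)) (\<lambda>\<omega>. f b (X \<omega> + sqrt s *\<^sub>R W \<omega>))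
                    - covar M (\<lambda>\<omega>. f a (X \<omega>)) (\<lambda>\<omega>. f b (X \<omega>))) / s)
            \<longlongrightarrow> wasserstein_cov M X f a b
                 + (1/2) * (covar M (\<lambda>\<omega>. f a (X \<omega>)) (\<lambda>\<omega>. laplacian (f b) (X \<omega>))
                          + covar M (\<lambda>\<omega>. f b (X \<omega>)) (\<lambda>\<omega>. laplacian (f a) (X \<omega>)))) (at_right 0))
         \<and> ((\<forall>a. \<exists>c. \<forall>x. laplacian (f a) x = c) \<longrightarrow>
         (\<forall>a b.
           ((\<lambda>s. (covar M (\<lambda>\<omega>. f a (X \<omega> + sqrt s *\<^sub>R W \<omega>)) (\<lambda>\<omega>. f b (X \<omega> + sqrt s *\<^sub>R W \<omega>))
                    - covar M (\<lambda>\<omega>. f a (X \<omega>)) (\<lambda>\<omega>. f b (X \<omega>))) / s)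
            \<longlongrightarrow> wasserstein_cov M X f a b) (at_right 0)))"
proof -
  interpret isotropic_noise M X W
    using M X W indep W_mean W_var W_moments by (simp add: isotropic_noise_def isotropic_noise_axioms_def)
  have regular: "regular_estimator M X (f a)" for a
    using smooth mom0 mom1 mom2 by (simp add: regular_estimator_def)
  note limit = covar_perturbed_limit[OF regular regular, folded wasserstein_cov_def]
  show ?thesis
  proof (intro conjI allI impI limit)
    fix a b assume "\<forall>a. \<exists>c. \<forall>x. laplacian (f a) x = c"
    then obtain ca cb where "laplacian (f a) = (\<lambda>_. ca)" "laplacian (f b) = (\<lambda>_. cb)"
      by (metis ext)
    with limit[of a b] show "((\<lambda>s. (covar M (\<lambda>\<omega>. f a (X \<omega> + sqrt s *\<^sub>R W \<omega>)) (\<lambda>\<omega>. f b (X \<omega> + sqrt s *\<^sub>R W \<omega>))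
                    - covar M (\<lambda>\<omega>. f a (X \<omega>)) (\<lambda>\<omega>. f b (X \<omega>))) / s)
            \<longlongrightarrow> wasserstein_cov M X f a b) (at_right 0)"
      by (simp add: covar_const_right)
  qed
qed

end
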